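(* Let $N=\{1,\ldots,n\}$, $\mathcal{X}=\{-1,1\}^n$, and let $P\subseteq\Delta(\mathcal{X})$ be the convex hull of a finite set $\{p_j\}_{j\in M}\subsetneq\Delta(\mathcal{X})$, where $M=\{1,\ldots,m\}$. Then: (1) A deterministic voting rule $\phi$ is $P$-robust if and only if there exists a nonzero $w\in\mathbb{R}_+^n$ such that $$\frac{\sum_{i\in N} w_i r_i(\phi,p_j)}{\sum_{i\in N} w_i}>\frac12\quad\text{for all } j\in M.$$ In particular, a deterministic voting rule is robust (i.e. $\Delta(\mathcal{X})$-robust) if and only if it is a weighted majority rule with nonnegative weights such that there are no ties. (2) A deterministic voting rule $\phi$ is weakly $P$-robust if and only if there exists a nonzero $w\in\mathbb{R}_+^n$ such that $$\frac{\sum_{i\in N} w_i r_i(\phi,p_j)}{\sum_{i\in N} w_i}\geq\frac12\quad\text{for all } j\in M.$$ In particular, a deterministic voting rule is weakly robust (i.e. weakly $\Delta(\mathcal{X})$-robust) if and only if it is a weighted majority rule with nonnegative weights.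
   Context: A deterministic voting rule is a map $\phi:\mathcal{X}\to\{-1,1\}$. $\Delta(\mathcal{X})$ is the set of probability distributions on $\mathcal{X}$. For $p\in\Delta(\mathcal{X})$, the responsiveness of individual $i$ is $r_i(\phi,p)=p(\{x:\phi(x)=x_i\})$. For $P\subseteq\Delta(\mathcal{X})$, $\phi$ is $P$-robust if for every $p\in P$ there is at least one $i\in N$ with $r_i(\phi,p)>1/2$; $\phi$ is weakly $P$-robust if for every $p\in P$ there is at least one $i\in N$ with $r_i(\phi,p)\geq 1/2$. A weighted majority rule (WMR) with nonzero weight vector $w\in\mathbb{R}^n$ is a rule with $\phi(x)=1$ whenever $\sum_iw_ix_i>0$ and $\phi(x)=-1$ whenever $\sum_iw_ix_i<0$ (ties $\sum_iw_ix_i=0$ resolved arbitrarily); it has no ties if $\sum_iw_ix_i\neq0$ for all $x\in\mathcal{X}$. *)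

theory Defs
  imports Complex_Main
begin

text \<open>Individuals are N = {1..n}. A profile x \<in> X = {-1,1}^n is represented as a function
  nat \<Rightarrow> int with x i \<in> {-1,1} for i \<in> {1..n} and x i = 0 outside {1..n}.\<close>

definition profiles :: "nat \<Rightarrow> (nat \<Rightarrow> int) set" where
  "profiles n = {x. (\<forall>i\<in>{1..n}. x i = -1 \<or> x i = 1) \<and> (\<forall>i. i \<notin> {1..n} \<longrightarrow> x i = 0)}"

definition distributions :: "nat \<Rightarrow> ((nat \<Rightarrow> int) \<Rightarrow> real) set" where
  "distributions n = {p. (\<forall>x\<in>profiles n. 0 \<le> p x) \<and> (\<forall>x. x \<notin> profiles n \<longrightarrow> p x = 0)
                          \<and> sum p (profiles n) = 1}"

definition voting_rule :: "nat \<Rightarrow> ((nat \<Rightarrow> int) \<Rightarrow> int) \<Rightarrow> bool" where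
  "voting_rule n \<phi> \<longleftrightarrow> (\<forall>x\<in>profiles n. \<phi> x = -1 \<or> \<phi> x = 1)"

definition resp :: "nat \<Rightarrow> nat \<Rightarrow> ((nat \<Rightarrow> int) \<Rightarrow> int) \<Rightarrow> ((nat \<Rightarrow> int) \<Rightarrow> real) \<Rightarrow> real" where
  "resp n i \<phi> p = (\<Sum>x\<in>{x\<in>profiles n. \<phi> x = x i}. p x)"

definition robust :: "nat \<Rightarrow> ((nat \<Rightarrow> int) \<Rightarrow> real) set \<Rightarrow> ((nat \<Rightarrow> int) \<Rightarrow> int) \<Rightarrow> bool" where
  "robust n P \<phi> \<longleftrightarrow> (\<forall>p\<in>P. \<exists>i\<in>{1..n}. resp n i \<phi> p > 1/2)"

definition weakly_robust :: "nat \<Rightarrow> ((nat \<Rightarrow> int) \<Rightarrow> real) set \<Rightarrow> ((nat \<Rightarrow> int) \<Rightarrow> int) \<Rightarrow> bool" where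
  "weakly_robust n P \<phi> \<longleftrightarrow> (\<forall>p\<in>P. \<exists>i\<in>{1..n}. resp n i \<phi> p \<ge> 1/2)"

definition conv_family :: "nat \<Rightarrow> (nat \<Rightarrow> ((nat \<Rightarrow> int) \<Rightarrow> real)) \<Rightarrow> ((nat \<Rightarrow> int) \<Rightarrow> real) set" where
  "conv_family m p = {(\<lambda>x. \<Sum>j\<in>{1..m}. c j * p j x) | c.
      (\<forall>j\<in>{1..m}. 0 \<le> c j) \<and> (\<Sum>j\<in>{1..m}. c j) = 1}"

definition is_wmr :: "nat \<Rightarrow> (nat \<Rightarrow> real) \<Rightarrow> ((nat \<Rightarrow> int) \<Rightarrow> int) \<Rightarrow> bool" where
  "is_wmr n w \<phi> \<longleftrightarrow> (\<exists>i\<in>{1..n}. w i \<noteq> 0) \<and>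
     (\<forall>x\<in>profiles n. ((\<Sum>i\<in>{1..n}. w i * of_int (x i)) > 0 \<longrightarrow> \<phi> x = 1) \<and>
                       ((\<Sum>i\<in>{1..n}. w i * of_int (x i)) < 0 \<longrightarrow> \<phi> x = -1))"

definition no_ties :: "nat \<Rightarrow> (nat \<Rightarrow> real) \<Rightarrow> bool" where
  "no_ties n w \<longleftrightarrow> (\<forall>x\<in>profiles n. (\<Sum>i\<in>{1..n}. w i * of_int (x i)) \<noteq> 0)"

end

theory Submission
  imports Defs "HOL-Analysis.Function_Topology"
begin

(* Responsiveness is affine in the distribution, so phi is robust on the convex hull of the p_j iff
   every mixture of the rows of the matrix a j i = r_i(phi, p_j) - 1/2 has a positive entry. By
   Gordan's theorem of the alternative this holds iff some nonnegative nonzero weighting of the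
   individuals makes every row positive; the weak version is Gordan's theorem for the negated
   transpose. Delta(X) is the convex hull of the point masses delta_x, and
   r_i(phi, delta_x) - 1/2 = phi(x) x_i / 2, so there the condition says that phi(x) agrees in sign
   with sum_i w_i x_i: phi is a weighted majority rule. Gordan's theorem is proved with the point of
   minimal norm in a convex hull. *)

definition prob_vectors :: "'a set \<Rightarrow> ('a \<Rightarrow> real) set" where
  "prob_vectors S = {c. (\<forall>k\<in>S. 0 \<le> c k) \<and> sum c S = 1}"

lemma prob_vectors_ex_nonzero: "c \<in> prob_vectors S \<Longrightarrow> \<exists>k\<in>S. c k \<noteq> 0"
  unfolding prob_vectors_def using sum.neutral[of S c] by fastforce

lemma prob_vectors_normalize:
  assumes "\<forall>k\<in>S. 0 \<le> v k" "0 < sum v S"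
  shows "(\<lambda>k. v k / sum v S) \<in> prob_vectors S"
  using assms by (simp add: prob_vectors_def sum_divide_distrib[symmetric])

lemma prob_vectors_move_towards_vertex:
  assumes "l \<in> prob_vectors S" "finite S" "k \<in> S" "0 \<le> t" "t \<le> 1"
  shows "(\<lambda>k'. (1 - t) * l k' + t * of_bool (k' = k)) \<in> prob_vectors S"
proof -
  have "(\<Sum>k'\<in>S. (1 - t) * l k' + t * of_bool (k' = k))
      = (1 - t) * sum l S + t * (\<Sum>k'\<in>S. of_bool (k' = k))"
    by (simp add: sum.distrib sum_distrib_left)
  with assms show ?thesis
    by (simp add: prob_vectors_def)
qed

lemma sum_move_towards_vertex:
  fixes l :: "'k \<Rightarrow> real"
  assumes "finite S" "k \<in> S"
  shows "(\<Sum>k'\<in>S. ((1 - t) * l k' + t * of_bool (k' = k)) * G k' i)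
    = (\<Sum>k'\<in>S. l k' * G k' i) + t * (G k i - (\<Sum>k'\<in>S. l k' * G k' i))"
proof -
  have "(\<Sum>k'\<in>S. ((1 - t) * l k' + t * of_bool (k' = k)) * G k' i)
      = (\<Sum>k'\<in>S. (1 - t) * (l k' * G k' i)) + (\<Sum>k'\<in>S. t * (of_bool (k' = k) * G k' i))"
    by (simp add: distrib_right mult.assoc sum.distrib)
  also have "\<dots> = (1 - t) * (\<Sum>k'\<in>S. l k' * G k' i) + t * G k i"
    using assms by (simp add: sum_distrib_left[symmetric])
  finally show ?thesis
    by (simp add: algebra_simps)
qed

lemma sum_weighted_pos:
  fixes w y :: "'a \<Rightarrow> real"
  assumes "finite I" "\<forall>i\<in>I. 0 \<le> w i" "\<exists>i\<in>I. w i \<noteq> 0" "\<forall>i\<in>I. 0 < y i"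
  shows "0 < (\<Sum>i\<in>I. w i * y i)"
proof -
  obtain i0 where "i0 \<in> I" "w i0 \<noteq> 0"
    using assms(3) by blast
  with assms(2,4) have "0 < w i0 * y i0"
    by (simp add: order_le_neq_trans)
  with assms(1,2,4) \<open>i0 \<in> I\<close> show ?thesis
    by (intro sum_pos2[of I i0]) (simp_all add: less_imp_le)
qed

lemma sum_swap_weighted:
  fixes c :: "'j \<Rightarrow> real" and w :: "'i \<Rightarrow> real" and a :: "'j \<Rightarrow> 'i \<Rightarrow> real"
  shows "(\<Sum>j\<in>J. c j * (\<Sum>i\<in>I. w i * a j i)) = (\<Sum>i\<in>I. w i * (\<Sum>j\<in>J. c j * a j i))"
  by (simp add: sum_distrib_left sum.swap[of _ J] mult.left_commute)

lemma sum_square_shift: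
  fixes z g :: "'i \<Rightarrow> real"
  shows "(\<Sum>i\<in>I. (z i + t * (g i - z i))\<^sup>2)
    = (\<Sum>i\<in>I. (z i)\<^sup>2) + t * (2 * (\<Sum>i\<in>I. z i * (g i - z i)) + t * (\<Sum>i\<in>I. (g i - z i)\<^sup>2))"
proof -
  have "(\<Sum>i\<in>I. (z i + t * (g i - z i))\<^sup>2)
      = (\<Sum>i\<in>I. (z i)\<^sup>2 + t * (2 * (z i * (g i - z i)) + t * (g i - z i)\<^sup>2))"
    by (intro sum.cong refl) (simp add: power2_eq_square algebra_simps)
  then show ?thesis
    by (simp add: sum.distrib sum_distrib_left distrib_left)
qed

lemma affine_nonneg_near_zero_imp_nonneg:
  fixes \<beta> \<gamma> :: real
  assumes "\<And>t. 0 < t \<Longrightarrow> t \<le> 1 \<Longrightarrow> 0 \<le> \<beta> + t * \<gamma>"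
  shows "0 \<le> \<beta>"
proof (rule tendsto_lowerbound)
  show "((\<lambda>t. \<beta> + t * \<gamma>) \<longlongrightarrow> \<beta>) (at_right 0)"
    by (auto intro!: tendsto_eq_intros)
  show "\<forall>\<^sub>F t in at_right 0. 0 \<le> \<beta> + t * \<gamma>"
    unfolding eventually_at_right_field using assms by (intro exI[of _ 1]) auto
qed simp

lemma compact_prob_vectors_vanishing_outside:
  assumes "finite S"
  shows "compact {l \<in> prob_vectors S. \<forall>k. k \<notin> S \<longrightarrow> l k = 0}" (is "compact ?T")
proof -
  have "compactin (product_topology (\<lambda>_. euclidean) UNIV) (PiE UNIV (\<lambda>_. {0..1::real}))"
    by (subst compactin_PiE) auto
  then have cube: "compact (Pi UNIV (\<lambda>_::'a. {0..1::real}))"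
    by (simp add: euclidean_product_topology PiE_UNIV_domain)
  have "closed ?T"
    unfolding prob_vectors_def Ball_def mem_Collect_eq
    by (intro closed_Collect_conj closed_Collect_all closed_Collect_imp closed_Collect_le
        closed_Collect_eq open_Collect_neg continuous_intros continuous_on_product_coordinates)
       (simp_all add: Collect_const)
  have "l k \<in> {0..1}" if "l \<in> ?T" for l k
    using that assms member_le_sum[of k S l] by (cases "k \<in> S") (auto simp: prob_vectors_def)
  then have "?T \<inter> Pi UNIV (\<lambda>_. {0..1}) = ?T"
    by blast
  with closed_Int_compact[OF \<open>closed ?T\<close> cube] show ?thesis
    by simp
qed

lemma prob_vectors_attains_min:
  fixes f :: "('k \<Rightarrow> real) \<Rightarrow> real"
  assumes "finite S" "S \<noteq> {}" "continuous_on UNIV f"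
    and depends_on_S: "\<And>l l'. \<forall>k\<in>S. l k = l' k \<Longrightarrow> f l = f l'"
  shows "\<exists>l\<in>prob_vectors S. \<forall>l'\<in>prob_vectors S. f l \<le> f l'"
proof -
  define T where "T = {l \<in> prob_vectors S. \<forall>k. k \<notin> S \<longrightarrow> l k = 0}"
  obtain k0 where "k0 \<in> S"
    using assms(2) by blast
  then have "(\<lambda>k. of_bool (k = k0)) \<in> T"
    using assms(1) by (auto simp: T_def prob_vectors_def)
  then have "T \<noteq> {}"
    by blast
  moreover have "compact T"
    unfolding T_def using assms(1) by (rule compact_prob_vectors_vanishing_outside)
  moreover have "continuous_on T f"
    using assms(3) by (rule continuous_on_subset) simp
  ultimately obtain l where "l \<in> T" and l_min: "\<forall>l'\<in>T. f l \<le> f l'"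
    using continuous_attains_inf[of T f] by blast
  have "f l \<le> f l'" if "l' \<in> prob_vectors S" for l'
  proof -
    define l'' where "l'' k = (if k \<in> S then l' k else 0)" for k
    have "sum l'' S = sum l' S"
      by (rule sum.cong) (simp_all add: l''_def)
    with that have "l'' \<in> T"
      by (simp add: T_def prob_vectors_def l''_def)
    moreover have "f l'' = f l'"
      by (rule depends_on_S) (simp add: l''_def)
    ultimately show ?thesis
      using l_min by fastforce
  qed
  moreover have "l \<in> prob_vectors S"
    using \<open>l \<in> T\<close> by (simp add: T_def)
  ultimately show ?thesis
    by blast
qed

(* The point z = sum_k l k * G k of minimal norm in the convex hull of the G k; first-order
   optimality gives <z, G k> >= |z|^2. *)
lemma exists_min_norm_mixture:
  fixes G :: "'k \<Rightarrow> 'i \<Rightarrow> real"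
  assumes "finite S" "S \<noteq> {}"
  shows "\<exists>l\<in>prob_vectors S. \<forall>k\<in>S.
           (\<Sum>i\<in>I. (\<Sum>k'\<in>S. l k' * G k' i)\<^sup>2) \<le> (\<Sum>i\<in>I. (\<Sum>k'\<in>S. l k' * G k' i) * G k i)"
proof -
  define f where "f l = (\<Sum>i\<in>I. (\<Sum>k\<in>S. l k * G k i)\<^sup>2)" for l
  have "continuous_on UNIV f"
    unfolding f_def by (intro continuous_intros continuous_on_product_coordinates)
  moreover have "f l = f l'" if "\<forall>k\<in>S. l k = l' k" for l l'
    using that by (simp add: f_def)
  ultimately obtain l where l: "l \<in> prob_vectors S" and l_min: "\<forall>l'\<in>prob_vectors S. f l \<le> f l'"
    using prob_vectors_attains_min[OF assms] by blast
  define z where "z i = (\<Sum>k\<in>S. l k * G k i)" for i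
  have "(\<Sum>i\<in>I. (z i)\<^sup>2) \<le> (\<Sum>i\<in>I. z i * G k i)" if "k \<in> S" for k
  proof -
    have "0 \<le> 2 * (\<Sum>i\<in>I. z i * (G k i - z i)) + t * (\<Sum>i\<in>I. (G k i - z i)\<^sup>2)"
      if "0 < t" "t \<le> 1" for t
    proof -
      define l' where "l' = (\<lambda>k'. (1 - t) * l k' + t * of_bool (k' = k))"
      have "l' \<in> prob_vectors S"
        unfolding l'_def using l assms(1) \<open>k \<in> S\<close> that
        by (intro prob_vectors_move_towards_vertex) simp_all
      have "f l' = (\<Sum>i\<in>I. (z i + t * (G k i - z i))\<^sup>2)"
        using \<open>k \<in> S\<close> assms(1) by (simp add: f_def l'_def z_def sum_move_towards_vertex)
      also have "\<dots> = f l + t * (2 * (\<Sum>i\<in>I. z i * (G k i - z i)) + t * (\<Sum>i\<in>I. (G k i - z i)\<^sup>2))"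
        by (simp add: sum_square_shift f_def z_def)
      finally show ?thesis
        using l_min[rule_format, OF \<open>l' \<in> prob_vectors S\<close>] \<open>0 < t\<close> by (simp add: zero_le_mult_iff)
    qed
    then have "0 \<le> 2 * (\<Sum>i\<in>I. z i * (G k i - z i))"
      by (rule affine_nonneg_near_zero_imp_nonneg)
    then show ?thesis
      by (simp add: algebra_simps sum_subtractf power2_eq_square)
  qed
  with l show ?thesis
    unfolding z_def by blast
qed

lemma mixture_nonpos_of_vanishing_combination:
  fixes l :: "'j + 'i \<Rightarrow> real" and b :: "'j \<Rightarrow> 'i \<Rightarrow> real"
  assumes "finite J" "finite I" and l: "l \<in> prob_vectors (J <+> I)"
    and vanish: "\<forall>i\<in>I. (\<Sum>j\<in>J. l (Inl j) * b j i) + l (Inr i) = 0"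
  shows "\<exists>c\<in>prob_vectors J. \<forall>i\<in>I. (\<Sum>j\<in>J. c j * b j i) \<le> 0"
proof -
  have l_Inl: "0 \<le> l (Inl j)" if "j \<in> J" for j
    using l InlI[OF that, where B = I] by (simp add: prob_vectors_def)
  have l_Inr: "0 \<le> l (Inr i)" if "i \<in> I" for i
    using l InrI[OF that, where A = J] by (simp add: prob_vectors_def)
  define s where "s = (\<Sum>j\<in>J. l (Inl j))"
  have "0 < s"
  proof (rule ccontr)
    assume "\<not> 0 < s"
    moreover have "0 \<le> s"
      unfolding s_def using l_Inl by (simp add: sum_nonneg)
    ultimately have "s = 0"
      by linarith
    then have Inl_zero: "\<forall>j\<in>J. l (Inl j) = 0"
      using sum_nonneg_eq_0_iff[OF assms(1), of "\<lambda>j. l (Inl j)"] l_Inl by (simp add: s_def)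
    then have "\<forall>i\<in>I. l (Inr i) = 0"
      using vanish by (simp add: sum.neutral)
    with Inl_zero have "sum l (J <+> I) = 0"
      using assms(1,2) by (simp add: sum.Plus sum.neutral)
    with l show False
      by (simp add: prob_vectors_def)
  qed
  have "(\<lambda>j. l (Inl j) / s) \<in> prob_vectors J"
    using prob_vectors_normalize[of J "\<lambda>j. l (Inl j)"] l_Inl \<open>0 < s\<close> by (simp add: s_def)
  moreover have "(\<Sum>j\<in>J. l (Inl j) / s * b j i) \<le> 0" if "i \<in> I" for i
  proof -
    have "(\<Sum>j\<in>J. l (Inl j) * b j i) = - l (Inr i)"
      using vanish that by (simp add: eq_neg_iff_add_eq_0)
    moreover have "(\<Sum>j\<in>J. l (Inl j) / s * b j i) = (\<Sum>j\<in>J. l (Inl j) * b j i) / s"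
      by (simp add: sum_divide_distrib)
    ultimately show ?thesis
      using l_Inr[OF that] \<open>0 < s\<close> by simp
  qed
  ultimately show ?thesis
    by (intro bexI[of _ "\<lambda>j. l (Inl j) / s"]) simp_all
qed

(* Take the point z of minimal norm in the convex hull of the rows b j and the unit vectors e i.
   Then z i = <z, e i> and <z, b j> are all >= |z|^2, which is positive: z = 0 would be a convex
   combination of rows and unit vectors, giving a mixture of rows that is <= 0. *)
lemma gordan_alternative:
  fixes b :: "'j \<Rightarrow> 'i \<Rightarrow> real"
  assumes "finite J" "finite I" "I \<noteq> {}"
    and no_mixture: "\<not> (\<exists>c\<in>prob_vectors J. \<forall>i\<in>I. (\<Sum>j\<in>J. c j * b j i) \<le> 0)"
  shows "\<exists>w. (\<forall>i\<in>I. 0 < w i) \<and> (\<forall>j\<in>J. 0 < (\<Sum>i\<in>I. w i * b j i))"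
proof -
  define G :: "'j + 'i \<Rightarrow> 'i \<Rightarrow> real" where "G = case_sum b (\<lambda>i i'. of_bool (i' = i))"
  have "finite (J <+> I)" "J <+> I \<noteq> {}"
    using assms(1-3) by auto
  then obtain l where l: "l \<in> prob_vectors (J <+> I)" and l_min: "\<forall>k\<in>J <+> I.
      (\<Sum>i\<in>I. (\<Sum>k'\<in>J <+> I. l k' * G k' i)\<^sup>2) \<le> (\<Sum>i\<in>I. (\<Sum>k'\<in>J <+> I. l k' * G k' i) * G k i)"
    by (blast dest: exists_min_norm_mixture[where I = I and G = G])
  define z where "z i = (\<Sum>k\<in>J <+> I. l k * G k i)" for i
  define N where "N = (\<Sum>i\<in>I. (z i)\<^sup>2)"
  have z_eq: "z i = (\<Sum>j\<in>J. l (Inl j) * b j i) + l (Inr i)" if "i \<in> I" for i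
    using that assms(1,2) by (simp add: z_def sum.Plus G_def)
  have z_ge: "N \<le> z i" if "i \<in> I" for i
  proof -
    have "N \<le> (\<Sum>i'\<in>I. z i' * G (Inr i) i')"
      using l_min[rule_format, OF InrI[OF that]] unfolding N_def z_def[symmetric] .
    then show ?thesis
      using that assms(2) by (simp add: G_def)
  qed
  have zb_ge: "N \<le> (\<Sum>i\<in>I. z i * b j i)" if "j \<in> J" for j
  proof -
    have "N \<le> (\<Sum>i\<in>I. z i * G (Inl j) i)"
      using l_min[rule_format, OF InlI[OF that]] unfolding N_def z_def[symmetric] .
    then show ?thesis
      by (simp add: G_def)
  qed
  have "0 < N"
  proof (rule ccontr)
    assume "\<not> 0 < N"
    moreover have "0 \<le> N"
      unfolding N_def by (intro sum_nonneg) simp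
    ultimately have "N = 0"
      by linarith
    then have "\<forall>i\<in>I. z i = 0"
      using sum_nonneg_eq_0_iff[OF assms(2), of "\<lambda>i. (z i)\<^sup>2"] by (simp add: N_def)
    with z_eq have "\<forall>i\<in>I. (\<Sum>j\<in>J. l (Inl j) * b j i) + l (Inr i) = 0"
      by simp
    with no_mixture show False
      using mixture_nonpos_of_vanishing_combination[OF assms(1,2) l] by blast
  qed
  show ?thesis
  proof (intro exI[of _ z] conjI ballI)
    show "0 < z i" if "i \<in> I" for i
      using z_ge[OF that] \<open>0 < N\<close> by linarith
    show "0 < (\<Sum>i\<in>I. z i * b j i)" if "j \<in> J" for j
      using zb_ge[OF that] \<open>0 < N\<close> by linarith
  qed
qed

lemma mixed_pos_iff_weighted_pos:
  fixes a :: "'j \<Rightarrow> 'i \<Rightarrow> real"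
  assumes "finite J" "finite I" "I \<noteq> {}"
  shows "(\<forall>c\<in>prob_vectors J. \<exists>i\<in>I. 0 < (\<Sum>j\<in>J. c j * a j i)) \<longleftrightarrow>
    (\<exists>w. (\<forall>i\<in>I. 0 \<le> w i) \<and> (\<exists>i\<in>I. w i \<noteq> 0) \<and> (\<forall>j\<in>J. 0 < (\<Sum>i\<in>I. w i * a j i)))"
proof
  assume "\<forall>c\<in>prob_vectors J. \<exists>i\<in>I. 0 < (\<Sum>j\<in>J. c j * a j i)"
  then have "\<not> (\<exists>c\<in>prob_vectors J. \<forall>i\<in>I. (\<Sum>j\<in>J. c j * a j i) \<le> 0)"
    by (simp add: not_le)
  then obtain w where "\<forall>i\<in>I. 0 < w i" and "\<forall>j\<in>J. 0 < (\<Sum>i\<in>I. w i * a j i)"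
    using gordan_alternative[OF assms] by blast
  moreover obtain i0 where "i0 \<in> I"
    using assms(3) by blast
  ultimately show "\<exists>w. (\<forall>i\<in>I. 0 \<le> w i) \<and> (\<exists>i\<in>I. w i \<noteq> 0) \<and> (\<forall>j\<in>J. 0 < (\<Sum>i\<in>I. w i * a j i))"
    by (intro exI[of _ w] conjI bexI[of _ i0]) (simp_all add: less_imp_le less_imp_neq[symmetric])
next
  assume "\<exists>w. (\<forall>i\<in>I. 0 \<le> w i) \<and> (\<exists>i\<in>I. w i \<noteq> 0) \<and> (\<forall>j\<in>J. 0 < (\<Sum>i\<in>I. w i * a j i))"
  then obtain w where w_nonneg: "\<forall>i\<in>I. 0 \<le> w i" and w_nonzero: "\<exists>i\<in>I. w i \<noteq> 0"
    and w_pos: "\<forall>j\<in>J. 0 < (\<Sum>i\<in>I. w i * a j i)"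
    by blast
  show "\<forall>c\<in>prob_vectors J. \<exists>i\<in>I. 0 < (\<Sum>j\<in>J. c j * a j i)"
  proof
    fix c assume c: "c \<in> prob_vectors J"
    have "0 < (\<Sum>j\<in>J. c j * (\<Sum>i\<in>I. w i * a j i))"
      using c assms(1) w_pos prob_vectors_ex_nonzero[OF c]
      by (intro sum_weighted_pos) (simp_all add: prob_vectors_def)
    also have "\<dots> = (\<Sum>i\<in>I. w i * (\<Sum>j\<in>J. c j * a j i))"
      by (rule sum_swap_weighted)
    finally have "0 < (\<Sum>i\<in>I. w i * (\<Sum>j\<in>J. c j * a j i))" .
    moreover have "(\<Sum>i\<in>I. w i * (\<Sum>j\<in>J. c j * a j i)) \<le> 0"
      if "\<forall>i\<in>I. (\<Sum>j\<in>J. c j * a j i) \<le> 0"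
      using that w_nonneg by (intro sum_nonpos) (simp add: mult_nonneg_nonpos)
    ultimately show "\<exists>i\<in>I. 0 < (\<Sum>j\<in>J. c j * a j i)"
      by (meson not_le)
  qed
qed

(* Otherwise Gordan's theorem for the negated transpose yields a mixture of rows that is
   negative in every column. *)
lemma weighted_nonneg_of_mixed_nonneg:
  fixes a :: "'j \<Rightarrow> 'i \<Rightarrow> real"
  assumes "finite J" "finite I" "J \<noteq> {}"
    and mixed: "\<forall>c\<in>prob_vectors J. \<exists>i\<in>I. 0 \<le> (\<Sum>j\<in>J. c j * a j i)"
  shows "\<exists>w. (\<forall>i\<in>I. 0 \<le> w i) \<and> (\<exists>i\<in>I. w i \<noteq> 0) \<and> (\<forall>j\<in>J. 0 \<le> (\<Sum>i\<in>I. w i * a j i))"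
    (is ?weights)
proof (rule ccontr)
  assume no_weights: "\<not> ?weights"
  have "\<not> (\<exists>c\<in>prob_vectors I. \<forall>j\<in>J. (\<Sum>i\<in>I. c i * - a j i) \<le> 0)"
  proof
    assume "\<exists>c\<in>prob_vectors I. \<forall>j\<in>J. (\<Sum>i\<in>I. c i * - a j i) \<le> 0"
    then obtain c where c: "c \<in> prob_vectors I" and "\<forall>j\<in>J. (\<Sum>i\<in>I. c i * - a j i) \<le> 0"
      by blast
    then have "\<forall>j\<in>J. 0 \<le> (\<Sum>i\<in>I. c i * a j i)"
      by (simp add: sum_negf)
    moreover have "\<forall>i\<in>I. 0 \<le> c i"
      using c by (simp add: prob_vectors_def)
    ultimately show False
      using no_weights prob_vectors_ex_nonzero[OF c] by blast
  qed
  then obtain v where v_pos: "\<forall>j\<in>J. 0 < v j" and v_neg: "\<forall>i\<in>I. 0 < (\<Sum>j\<in>J. v j * - a j i)"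
    using gordan_alternative[where b = "\<lambda>i j. - a j i", OF assms(2,1,3)] by blast
  define V where "V = sum v J"
  have "0 < V"
    unfolding V_def using assms(1,3) v_pos by (simp add: sum_pos)
  then have "(\<lambda>j. v j / V) \<in> prob_vectors J"
    unfolding V_def using v_pos by (intro prob_vectors_normalize) (simp_all add: less_imp_le)
  from mixed[rule_format, OF this] obtain i
    where "i \<in> I" and "0 \<le> (\<Sum>j\<in>J. v j / V * a j i)" ..
  moreover have "(\<Sum>j\<in>J. v j / V * a j i) = - ((\<Sum>j\<in>J. v j * - a j i) / V)"
    by (simp add: sum_divide_distrib sum_negf)
  moreover have "0 < (\<Sum>j\<in>J. v j * - a j i) / V"
    using v_neg \<open>i \<in> I\<close> \<open>0 < V\<close> by simp
  ultimately show False
    by linarith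
qed

lemma mixed_nonneg_iff_weighted_nonneg:
  fixes a :: "'j \<Rightarrow> 'i \<Rightarrow> real"
  assumes "finite J" "finite I" "I \<noteq> {}"
  shows "(\<forall>c\<in>prob_vectors J. \<exists>i\<in>I. 0 \<le> (\<Sum>j\<in>J. c j * a j i)) \<longleftrightarrow>
    (\<exists>w. (\<forall>i\<in>I. 0 \<le> w i) \<and> (\<exists>i\<in>I. w i \<noteq> 0) \<and> (\<forall>j\<in>J. 0 \<le> (\<Sum>i\<in>I. w i * a j i)))"
    (is "?mixed \<longleftrightarrow> ?weights")
proof
  assume ?mixed
  show ?weights
  proof (cases "J = {}")
    case True
    obtain i0 where "i0 \<in> I"
      using assms(3) by blast
    with True show ?thesis
      by (intro exI[of _ "\<lambda>_. 1"] conjI bexI[of _ i0]) simp_all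
  next
    case False
    with assms(1,2) \<open>?mixed\<close> show ?thesis
      by (intro weighted_nonneg_of_mixed_nonneg)
  qed
next
  assume ?weights
  then obtain w where w_nonneg: "\<forall>i\<in>I. 0 \<le> w i" and w_nonzero: "\<exists>i\<in>I. w i \<noteq> 0"
    and w_nonneg_rows: "\<forall>j\<in>J. 0 \<le> (\<Sum>i\<in>I. w i * a j i)"
    by blast
  show ?mixed
  proof
    fix c assume c: "c \<in> prob_vectors J"
    have "0 \<le> (\<Sum>j\<in>J. c j * (\<Sum>i\<in>I. w i * a j i))"
      using c w_nonneg_rows by (intro sum_nonneg) (simp add: prob_vectors_def)
    also have "\<dots> = (\<Sum>i\<in>I. w i * (\<Sum>j\<in>J. c j * a j i))"
      by (rule sum_swap_weighted)
    finally have "0 \<le> (\<Sum>i\<in>I. w i * (\<Sum>j\<in>J. c j * a j i))" .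
    moreover have "(\<Sum>i\<in>I. w i * (\<Sum>j\<in>J. c j * a j i)) < 0"
      if "\<forall>i\<in>I. (\<Sum>j\<in>J. c j * a j i) < 0"
    proof -
      have "0 < (\<Sum>i\<in>I. w i * - (\<Sum>j\<in>J. c j * a j i))"
        using assms(2) w_nonneg w_nonzero that by (intro sum_weighted_pos) simp_all
      then show ?thesis
        by (simp add: sum_negf)
    qed
    ultimately show "\<exists>i\<in>I. 0 \<le> (\<Sum>j\<in>J. c j * a j i)"
      by (meson not_le)
  qed
qed

lemma half_weighted_average_iff:
  fixes w r :: "'a \<Rightarrow> real"
  assumes "finite I" "\<forall>i\<in>I. 0 \<le> w i" "\<exists>i\<in>I. w i \<noteq> 0"
  shows "1/2 < (\<Sum>i\<in>I. w i * r i) / sum w I \<longleftrightarrow> 0 < (\<Sum>i\<in>I. w i * (r i - 1/2))"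
    and "1/2 \<le> (\<Sum>i\<in>I. w i * r i) / sum w I \<longleftrightarrow> 0 \<le> (\<Sum>i\<in>I. w i * (r i - 1/2))"
proof -
  have "0 < (\<Sum>i\<in>I. w i * 1)"
    using assms by (intro sum_weighted_pos) simp_all
  then have "0 < sum w I"
    by simp
  moreover have "(\<Sum>i\<in>I. w i * (r i - 1/2)) = (\<Sum>i\<in>I. w i * r i) - sum w I / 2"
    by (simp add: right_diff_distrib sum_subtractf sum_divide_distrib)
  ultimately show "1/2 < (\<Sum>i\<in>I. w i * r i) / sum w I \<longleftrightarrow> 0 < (\<Sum>i\<in>I. w i * (r i - 1/2))"
    and "1/2 \<le> (\<Sum>i\<in>I. w i * r i) / sum w I \<longleftrightarrow> 0 \<le> (\<Sum>i\<in>I. w i * (r i - 1/2))"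
    by (simp_all add: less_divide_eq le_divide_eq)
qed

definition mixtures :: "'j set \<Rightarrow> ('j \<Rightarrow> 'a \<Rightarrow> real) \<Rightarrow> ('a \<Rightarrow> real) set" where
  "mixtures J q = {(\<lambda>x. \<Sum>j\<in>J. c j * q j x) | c. c \<in> prob_vectors J}"

lemma conv_family_eq_mixtures: "conv_family m p = mixtures {1..m} p"
  by (simp add: conv_family_def mixtures_def prob_vectors_def)

lemma finite_profiles: "finite (profiles n)"
proof -
  have "profiles n = {x. \<forall>i. (i \<in> {1..n} \<longrightarrow> x i \<in> {-1, 1}) \<and> (i \<notin> {1..n} \<longrightarrow> x i = 0)}"
    by (auto simp: profiles_def)
  also have "finite \<dots>"
    by (rule finite_set_of_finite_funs) auto
  finally show ?thesis .
qed

lemma distributions_eq_mixtures: "distributions n = mixtures (profiles n) (\<lambda>x y. of_bool (y = x))"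
proof (intro equalityI subsetI)
  fix q assume q: "q \<in> distributions n"
  have "q = (\<lambda>y. \<Sum>x\<in>profiles n. q x * of_bool (y = x))"
  proof
    fix y
    show "q y = (\<Sum>x\<in>profiles n. q x * of_bool (y = x))"
      using q finite_profiles[of n] by (cases "y \<in> profiles n") (simp_all add: distributions_def)
  qed
  moreover have "q \<in> prob_vectors (profiles n)"
    using q by (simp add: distributions_def prob_vectors_def)
  ultimately show "q \<in> mixtures (profiles n) (\<lambda>x y. of_bool (y = x))"
    unfolding mixtures_def by blast
next
  fix q assume "q \<in> mixtures (profiles n) (\<lambda>x y. of_bool (y = x))"
  then obtain c where c: "c \<in> prob_vectors (profiles n)"
    and q: "q = (\<lambda>y. \<Sum>x\<in>profiles n. c x * of_bool (y = x))"
    unfolding mixtures_def by blast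
  have q_eq: "q y = (if y \<in> profiles n then c y else 0)" for y
    using finite_profiles[of n] by (simp add: q)
  show "q \<in> distributions n"
    using c by (simp add: distributions_def prob_vectors_def q_eq)
qed

lemma resp_mixture:
  assumes "c \<in> prob_vectors J"
  shows "resp n i \<phi> (\<lambda>x. \<Sum>j\<in>J. c j * q j x) - 1/2 = (\<Sum>j\<in>J. c j * (resp n i \<phi> (q j) - 1/2))"
proof -
  have "resp n i \<phi> (\<lambda>x. \<Sum>j\<in>J. c j * q j x) = (\<Sum>j\<in>J. c j * resp n i \<phi> (q j))"
    unfolding resp_def by (simp add: sum_distrib_left sum.swap[where A = J])
  moreover have "(\<Sum>j\<in>J. c j * (resp n i \<phi> (q j) - 1/2)) = (\<Sum>j\<in>J. c j * resp n i \<phi> (q j)) - 1/2"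
    using assms by (simp add: prob_vectors_def right_diff_distrib sum_subtractf flip: sum_divide_distrib)
  ultimately show ?thesis
    by simp
qed

lemma resp_point_mass:
  assumes "x \<in> profiles n"
  shows "resp n i \<phi> (\<lambda>y. of_bool (y = x)) = of_bool (\<phi> x = x i)"
  unfolding resp_def using assms finite_profiles[of n] by simp

lemma point_mass_advantage:
  assumes "voting_rule n \<phi>" "x \<in> profiles n"
  shows "(\<Sum>i\<in>{1..n}. w i * (resp n i \<phi> (\<lambda>y. of_bool (y = x)) - 1/2))
    = of_int (\<phi> x) * (\<Sum>i\<in>{1..n}. w i * of_int (x i)) / 2"
proof -
  have "of_bool (\<phi> x = x i) - 1/2 = of_int (\<phi> x) * of_int (x i) / (2::real)" if "i \<in> {1..n}" for i
  proof -
    have "\<phi> x = -1 \<or> \<phi> x = 1" "x i = -1 \<or> x i = 1"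
      using assms that by (auto simp: voting_rule_def profiles_def)
    then show ?thesis
      by auto
  qed
  then have "(\<Sum>i\<in>{1..n}. w i * (resp n i \<phi> (\<lambda>y. of_bool (y = x)) - 1/2))
      = (\<Sum>i\<in>{1..n}. of_int (\<phi> x) * (w i * of_int (x i)) / 2)"
    using assms(2) by (intro sum.cong refl) (simp add: resp_point_mass)
  also have "\<dots> = of_int (\<phi> x) * (\<Sum>i\<in>{1..n}. w i * of_int (x i)) / 2"
    by (simp add: sum_distrib_left sum_divide_distrib)
  finally show ?thesis .
qed

lemma is_wmr_iff:
  assumes "voting_rule n \<phi>"
  shows "is_wmr n w \<phi> \<longleftrightarrow> (\<exists>i\<in>{1..n}. w i \<noteq> 0) \<and>
    (\<forall>x\<in>profiles n. 0 \<le> of_int (\<phi> x) * (\<Sum>i\<in>{1..n}. w i * of_int (x i)))"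
proof -
  have "((0 < s \<longrightarrow> \<phi> x = 1) \<and> (s < 0 \<longrightarrow> \<phi> x = -1)) \<longleftrightarrow> 0 \<le> of_int (\<phi> x) * s"
    if "x \<in> profiles n" for x and s :: real
    using assms that by (auto simp: voting_rule_def zero_le_mult_iff)
  then show ?thesis
    unfolding is_wmr_def by blast
qed

lemma is_wmr_no_ties_iff:
  assumes "voting_rule n \<phi>"
  shows "is_wmr n w \<phi> \<and> no_ties n w \<longleftrightarrow> (\<exists>i\<in>{1..n}. w i \<noteq> 0) \<and>
    (\<forall>x\<in>profiles n. 0 < of_int (\<phi> x) * (\<Sum>i\<in>{1..n}. w i * of_int (x i)))"
proof -
  have "0 < of_int (\<phi> x) * s \<longleftrightarrow> 0 \<le> of_int (\<phi> x) * s \<and> s \<noteq> 0"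
    if "x \<in> profiles n" for x and s :: real
    using assms that by (auto simp: voting_rule_def)
  then show ?thesis
    unfolding is_wmr_iff[OF assms] no_ties_def by blast
qed

lemma robust_mixtures_iff:
  assumes "finite J" "1 \<le> n"
  shows "robust n (mixtures J q) \<phi> \<longleftrightarrow> (\<exists>w. (\<forall>i\<in>{1..n}. 0 \<le> w i) \<and> (\<exists>i\<in>{1..n}. w i \<noteq> 0) \<and>
    (\<forall>j\<in>J. 0 < (\<Sum>i\<in>{1..n}. w i * (resp n i \<phi> (q j) - 1/2))))"
  (is "_ \<longleftrightarrow> ?weights")
proof -
  have "robust n (mixtures J q) \<phi> \<longleftrightarrow>
      (\<forall>c\<in>prob_vectors J. \<exists>i\<in>{1..n}. 1/2 < resp n i \<phi> (\<lambda>x. \<Sum>j\<in>J. c j * q j x))"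
    unfolding robust_def mixtures_def by blast
  also have "\<dots> \<longleftrightarrow> (\<forall>c\<in>prob_vectors J. \<exists>i\<in>{1..n}. 0 < (\<Sum>j\<in>J. c j * (resp n i \<phi> (q j) - 1/2)))"
    by (intro ball_cong bex_cong refl) (simp add: resp_mixture[symmetric])
  also have "\<dots> \<longleftrightarrow> ?weights"
    using assms by (intro mixed_pos_iff_weighted_pos) auto
  finally show ?thesis .
qed

lemma weakly_robust_mixtures_iff:
  assumes "finite J" "1 \<le> n"
  shows "weakly_robust n (mixtures J q) \<phi> \<longleftrightarrow> (\<exists>w. (\<forall>i\<in>{1..n}. 0 \<le> w i) \<and> (\<exists>i\<in>{1..n}. w i \<noteq> 0) \<and>
    (\<forall>j\<in>J. 0 \<le> (\<Sum>i\<in>{1..n}. w i * (resp n i \<phi> (q j) - 1/2))))"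
  (is "_ \<longleftrightarrow> ?weights")
proof -
  have "weakly_robust n (mixtures J q) \<phi> \<longleftrightarrow>
      (\<forall>c\<in>prob_vectors J. \<exists>i\<in>{1..n}. 1/2 \<le> resp n i \<phi> (\<lambda>x. \<Sum>j\<in>J. c j * q j x))"
    unfolding weakly_robust_def mixtures_def by blast
  also have "\<dots> \<longleftrightarrow> (\<forall>c\<in>prob_vectors J. \<exists>i\<in>{1..n}. 0 \<le> (\<Sum>j\<in>J. c j * (resp n i \<phi> (q j) - 1/2)))"
    by (intro ball_cong bex_cong refl) (simp add: resp_mixture[symmetric])
  also have "\<dots> \<longleftrightarrow> ?weights"
    using assms by (intro mixed_nonneg_iff_weighted_nonneg) auto
  finally show ?thesis .
qed

lemma robust_conv_family_iff:
  assumes "1 \<le> n"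
  shows "robust n (conv_family m p) \<phi> \<longleftrightarrow>
    (\<exists>w::nat \<Rightarrow> real. (\<forall>i\<in>{1..n}. 0 \<le> w i) \<and> (\<exists>i\<in>{1..n}. w i \<noteq> 0) \<and>
       (\<forall>j\<in>{1..m}. (\<Sum>i\<in>{1..n}. w i * resp n i \<phi> (p j)) / (\<Sum>i\<in>{1..n}. w i) > 1/2))"
proof -
  have "robust n (conv_family m p) \<phi> \<longleftrightarrow> (\<exists>w. (\<forall>i\<in>{1..n}. 0 \<le> w i) \<and> (\<exists>i\<in>{1..n}. w i \<noteq> 0) \<and>
      (\<forall>j\<in>{1..m}. 0 < (\<Sum>i\<in>{1..n}. w i * (resp n i \<phi> (p j) - 1/2))))"
    unfolding conv_family_eq_mixtures using assms by (intro robust_mixtures_iff) auto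
  also have "\<dots> \<longleftrightarrow> (\<exists>w::nat \<Rightarrow> real. (\<forall>i\<in>{1..n}. 0 \<le> w i) \<and> (\<exists>i\<in>{1..n}. w i \<noteq> 0) \<and>
      (\<forall>j\<in>{1..m}. (\<Sum>i\<in>{1..n}. w i * resp n i \<phi> (p j)) / (\<Sum>i\<in>{1..n}. w i) > 1/2))"
    by (intro ex_cong1 conj_cong refl ball_cong) (subst half_weighted_average_iff(1); simp)
  finally show ?thesis .
qed

lemma weakly_robust_conv_family_iff:
  assumes "1 \<le> n"
  shows "weakly_robust n (conv_family m p) \<phi> \<longleftrightarrow>
    (\<exists>w::nat \<Rightarrow> real. (\<forall>i\<in>{1..n}. 0 \<le> w i) \<and> (\<exists>i\<in>{1..n}. w i \<noteq> 0) \<and>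
       (\<forall>j\<in>{1..m}. (\<Sum>i\<in>{1..n}. w i * resp n i \<phi> (p j)) / (\<Sum>i\<in>{1..n}. w i) \<ge> 1/2))"
proof -
  have "weakly_robust n (conv_family m p) \<phi> \<longleftrightarrow> (\<exists>w. (\<forall>i\<in>{1..n}. 0 \<le> w i) \<and> (\<exists>i\<in>{1..n}. w i \<noteq> 0) \<and>
      (\<forall>j\<in>{1..m}. 0 \<le> (\<Sum>i\<in>{1..n}. w i * (resp n i \<phi> (p j) - 1/2))))"
    unfolding conv_family_eq_mixtures using assms by (intro weakly_robust_mixtures_iff) auto
  also have "\<dots> \<longleftrightarrow> (\<exists>w::nat \<Rightarrow> real. (\<forall>i\<in>{1..n}. 0 \<le> w i) \<and> (\<exists>i\<in>{1..n}. w i \<noteq> 0) \<and>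
      (\<forall>j\<in>{1..m}. (\<Sum>i\<in>{1..n}. w i * resp n i \<phi> (p j)) / (\<Sum>i\<in>{1..n}. w i) \<ge> 1/2))"
    by (intro ex_cong1 conj_cong refl ball_cong) (subst half_weighted_average_iff(2); simp)
  finally show ?thesis .
qed

lemma robust_distributions_iff:
  assumes "1 \<le> n" "voting_rule n \<phi>"
  shows "robust n (distributions n) \<phi> \<longleftrightarrow>
    (\<exists>w::nat \<Rightarrow> real. (\<forall>i\<in>{1..n}. 0 \<le> w i) \<and> is_wmr n w \<phi> \<and> no_ties n w)"
proof -
  have "robust n (distributions n) \<phi> \<longleftrightarrow> (\<exists>w. (\<forall>i\<in>{1..n}. 0 \<le> w i) \<and> (\<exists>i\<in>{1..n}. w i \<noteq> 0) \<and>
      (\<forall>x\<in>profiles n. 0 < (\<Sum>i\<in>{1..n}. w i * (resp n i \<phi> (\<lambda>y. of_bool (y = x)) - 1/2))))"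
    unfolding distributions_eq_mixtures using finite_profiles assms(1) by (rule robust_mixtures_iff)
  also have "\<dots> \<longleftrightarrow> (\<exists>w::nat \<Rightarrow> real. (\<forall>i\<in>{1..n}. 0 \<le> w i) \<and> (\<exists>i\<in>{1..n}. w i \<noteq> 0) \<and>
      (\<forall>x\<in>profiles n. 0 < of_int (\<phi> x) * (\<Sum>i\<in>{1..n}. w i * of_int (x i))))"
    by (intro ex_cong1 conj_cong refl ball_cong) (subst point_mass_advantage[OF assms(2)]; simp)
  also have "\<dots> \<longleftrightarrow> (\<exists>w::nat \<Rightarrow> real. (\<forall>i\<in>{1..n}. 0 \<le> w i) \<and> is_wmr n w \<phi> \<and> no_ties n w)"
    by (simp add: is_wmr_no_ties_iff[OF assms(2)])
  finally show ?thesis .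
qed

lemma weakly_robust_distributions_iff:
  assumes "1 \<le> n" "voting_rule n \<phi>"
  shows "weakly_robust n (distributions n) \<phi> \<longleftrightarrow>
    (\<exists>w::nat \<Rightarrow> real. (\<forall>i\<in>{1..n}. 0 \<le> w i) \<and> is_wmr n w \<phi>)"
proof -
  have "weakly_robust n (distributions n) \<phi> \<longleftrightarrow> (\<exists>w. (\<forall>i\<in>{1..n}. 0 \<le> w i) \<and> (\<exists>i\<in>{1..n}. w i \<noteq> 0) \<and>
      (\<forall>x\<in>profiles n. 0 \<le> (\<Sum>i\<in>{1..n}. w i * (resp n i \<phi> (\<lambda>y. of_bool (y = x)) - 1/2))))"
    unfolding distributions_eq_mixtures using finite_profiles assms(1) by (rule weakly_robust_mixtures_iff)
  also have "\<dots> \<longleftrightarrow> (\<exists>w::nat \<Rightarrow> real. (\<forall>i\<in>{1..n}. 0 \<le> w i) \<and> (\<exists>i\<in>{1..n}. w i \<noteq> 0) \<and>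
      (\<forall>x\<in>profiles n. 0 \<le> of_int (\<phi> x) * (\<Sum>i\<in>{1..n}. w i * of_int (x i))))"
    by (intro ex_cong1 conj_cong refl ball_cong) (subst point_mass_advantage[OF assms(2)]; simp)
  also have "\<dots> \<longleftrightarrow> (\<exists>w::nat \<Rightarrow> real. (\<forall>i\<in>{1..n}. 0 \<le> w i) \<and> is_wmr n w \<phi>)"
    by (simp add: is_wmr_iff[OF assms(2)])
  finally show ?thesis .
qed

theorem proposition1:
  fixes n m :: nat
    and p :: "nat \<Rightarrow> ((nat \<Rightarrow> int) \<Rightarrow> real)"
    and \<phi> :: "(nat \<Rightarrow> int) \<Rightarrow> int"
  assumes n_pos: "1 \<le> n"
    and family: "p ` {1..m} \<subset> distributions n"
    and rule: "voting_rule n \<phi>"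
  shows "(robust n (conv_family m p) \<phi> \<longleftrightarrow>
            (\<exists>w::nat \<Rightarrow> real. (\<forall>i\<in>{1..n}. 0 \<le> w i) \<and> (\<exists>i\<in>{1..n}. w i \<noteq> 0) \<and>
               (\<forall>j\<in>{1..m}. (\<Sum>i\<in>{1..n}. w i * resp n i \<phi> (p j)) / (\<Sum>i\<in>{1..n}. w i) > 1/2)))
       \<and> (robust n (distributions n) \<phi> \<longleftrightarrow>
            (\<exists>w::nat \<Rightarrow> real. (\<forall>i\<in>{1..n}. 0 \<le> w i) \<and> is_wmr n w \<phi> \<and> no_ties n w))
       \<and> (weakly_robust n (conv_family m p) \<phi> \<longleftrightarrow>
            (\<exists>w::nat \<Rightarrow> real. (\<forall>i\<in>{1..n}. 0 \<le> w i) \<and> (\<exists>i\<in>{1..n}. w i \<noteq> 0) \<and>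
               (\<forall>j\<in>{1..m}. (\<Sum>i\<in>{1..n}. w i * resp n i \<phi> (p j)) / (\<Sum>i\<in>{1..n}. w i) \<ge> 1/2)))
       \<and> (weakly_robust n (distributions n) \<phi> \<longleftrightarrow>
            (\<exists>w::nat \<Rightarrow> real. (\<forall>i\<in>{1..n}. 0 \<le> w i) \<and> is_wmr n w \<phi>))"
  using robust_conv_family_iff[OF n_pos] robust_distributions_iff[OF n_pos rule]
    weakly_robust_conv_family_iff[OF n_pos] weakly_robust_distributions_iff[OF n_pos rule]
  by (intro conjI)

end
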